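(* For every integer $d\ge 1$ there exist $q_0=q_0(d)>\frac{1}{d+1}$ and constants $c_1,c_2>0$ depending only on $d$ such that the following holds. If $G=(V,E)$ is a finite connected simple graph of maximal degree $d$, $p\in(0,1)$ and $q:=1-p\le q_0$, then the stationary distribution $\pi$ of the Bak–Sneppen model on $G$ with parameter $p$ satisfies, for every $k\ge 0$, \[ \pi\big(\eta:\ |\{x\in V:\eta_x=0\}|>k\big)\le c_1e^{-c_2k}. \]
   Context: Let $G=(V,E)$ be a finite connected simple graph (no loops, no multiple edges) and $p\in(0,1)$. The (continuous-time, discrete-valued) Bak–Sneppen model on $G$ with parameter $p$ is the continuous-time Markov process $\eta(t)\in\{0,1\}^V$ defined as follows. Each vertex $x$ carries an independent rate-$1$ Poisson clock. When the clock at $x$ rings: if $\eta_x=0$, or if $\eta_y=1$ for all $y\in V$, then the values $\eta_z$ for all $z$ in the neighbourhood $\{x\}\cup\{y:y\sim x\}$ are replaced by independent Bernoulli$(p)$ random variables (value $1$ with probability $p$, value $0$ with probability $q=1-p$); otherwise nothing happens. This is an irreducible finite Markov chain; $\pi$ is its stationary distribution. *)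

theory Defs
  imports Complex_Main
begin

text \<open>Finite connected simple graph on vertex set V (vertices are natural numbers,
  which covers every finite graph up to isomorphism), with adjacency relation E.\<close>
definition conn_simple_graph :: "nat set \<Rightarrow> (nat \<Rightarrow> nat \<Rightarrow> bool) \<Rightarrow> bool" where
  "conn_simple_graph V E \<longleftrightarrow>
     finite V \<and> V \<noteq> {} \<and>
     (\<forall>x y. E x y \<longrightarrow> x \<in> V \<and> y \<in> V) \<and>
     (\<forall>x y. E x y \<longrightarrow> E y x) \<and>
     (\<forall>x. \<not> E x x) \<and>
     (\<forall>x\<in>V. \<forall>y\<in>V. E\<^sup>*\<^sup>* x y)"

definition max_degree :: "nat set \<Rightarrow> (nat \<Rightarrow> nat \<Rightarrow> bool) \<Rightarrow> nat" where
  "max_degree V E = Max ((\<lambda>x. card {y \<in> V. E x y}) ` V)"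

definition nbhd :: "nat set \<Rightarrow> (nat \<Rightarrow> nat \<Rightarrow> bool) \<Rightarrow> nat \<Rightarrow> nat set" where
  "nbhd V E x = insert x {y \<in> V. E x y}"

text \<open>Configurations: \<open>\<eta> x = True\<close> encodes value 1, \<open>False\<close> encodes value 0;
  configurations are fixed to False outside V.\<close>
definition configs :: "nat set \<Rightarrow> (nat \<Rightarrow> bool) set" where
  "configs V = {\<eta>. \<forall>x. x \<notin> V \<longrightarrow> \<not> \<eta> x}"

text \<open>Jump rate of the Bak--Sneppen chain from \<eta> to \<eta>': sum over vertices x whose
  rate-1 clock ring is effective at \<eta>, times the probability that independent
  Bernoulli(p) resampling of the closed neighbourhood of x produces \<eta>'.\<close>
definition bs_rate :: "nat set \<Rightarrow> (nat \<Rightarrow> nat \<Rightarrow> bool) \<Rightarrow> real \<Rightarrow>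
    (nat \<Rightarrow> bool) \<Rightarrow> (nat \<Rightarrow> bool) \<Rightarrow> real" where
  "bs_rate V E p \<eta> \<eta>' =
     (\<Sum>x\<in>V. if (\<not> \<eta> x \<or> (\<forall>y\<in>V. \<eta> y)) \<and> (\<forall>z. z \<notin> nbhd V E x \<longrightarrow> \<eta>' z = \<eta> z)
             then (\<Prod>z\<in>nbhd V E x. if \<eta>' z then p else 1 - p)
             else 0)"

definition bs_stationary :: "nat set \<Rightarrow> (nat \<Rightarrow> nat \<Rightarrow> bool) \<Rightarrow> real \<Rightarrow>
    ((nat \<Rightarrow> bool) \<Rightarrow> real) \<Rightarrow> bool" where
  "bs_stationary V E p \<pi> \<longleftrightarrow>
     (\<forall>\<eta>\<in>configs V. \<pi> \<eta> \<ge> 0) \<and>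
     (\<Sum>\<eta>\<in>configs V. \<pi> \<eta>) = 1 \<and>
     (\<forall>\<eta>'\<in>configs V.
        (\<Sum>\<eta>\<in>configs V. \<pi> \<eta> * bs_rate V E p \<eta> \<eta>') =
        \<pi> \<eta>' * (\<Sum>\<eta>\<in>configs V. bs_rate V E p \<eta>' \<eta>))"

definition zeros :: "nat set \<Rightarrow> (nat \<Rightarrow> bool) \<Rightarrow> nat set" where
  "zeros V \<eta> = {x \<in> V. \<not> \<eta> x}"

end

theory Submission
  imports Defs
begin

(* The number of zeros alone is not a supermartingale: when a zero x rings, the expected number
   of zeros in its resampled closed neighbourhood is q (1 + deg x), which can exceed 1 once
   q > 1/(d+1). But x and each of its neighbours are both resampled to zero with probability q^2,
   creating a zero-zero edge, so the potential

     Phi = #zeros - 1/(8d) #(ordered zero-zero edges)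

   decreases in expectation by at least 1/(32 (d+1)^2) at every effective ring, as long as
   q <= 1/(d+1) + 1/(32 (d+1)^3). A ring changes Phi by O(d) and Phi >= 7/8 #zeros, so
   f = exp(theta Phi) satisfies a Foster-Lyapunov condition L f <= -c f away from the all-ones
   configuration, whose own contribution is bounded by its exit rate. Stationarity,
   sum_eta pi(eta) L f(eta) = 0, therefore bounds the pi-mean of f uniformly in the graph, and
   Markov's inequality gives the exponential tail. *)

section \<open>Independent resampling of a set of sites\<close>

definition resamplings :: "'a set \<Rightarrow> ('a \<Rightarrow> bool) \<Rightarrow> ('a \<Rightarrow> bool) set" where
  "resamplings A \<eta> = {\<eta>'. \<forall>z. z \<notin> A \<longrightarrow> \<eta>' z = \<eta> z}"

lemma resamplings_eq_image:
  "resamplings A \<eta> = (\<lambda>S z. if z \<in> A then z \<in> S else \<eta> z) ` Pow A"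
proof
  show "resamplings A \<eta> \<subseteq> (\<lambda>S z. if z \<in> A then z \<in> S else \<eta> z) ` Pow A"
  proof
    fix \<eta>' assume "\<eta>' \<in> resamplings A \<eta>"
    then have "\<eta>' = (\<lambda>z. if z \<in> A then z \<in> {y\<in>A. \<eta>' y} else \<eta> z)"
      by (auto simp: resamplings_def)
    then show "\<eta>' \<in> (\<lambda>S z. if z \<in> A then z \<in> S else \<eta> z) ` Pow A" by blast
  qed
qed (auto simp: resamplings_def)

lemma finite_resamplings: "finite A \<Longrightarrow> finite (resamplings A \<eta>)"
  by (simp add: resamplings_eq_image)

lemma resamplings_insert:
  "a \<notin> A \<Longrightarrow>
   resamplings (insert a A) \<eta> = resamplings A (\<eta>(a:=True)) \<union> resamplings A (\<eta>(a:=False))"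
  by (auto simp: resamplings_def)

lemma sum_prod_resamplings:
  fixes h :: "'a \<Rightarrow> bool \<Rightarrow> real"
  assumes "finite A"
  shows "(\<Sum>\<eta>'\<in>resamplings A \<eta>. \<Prod>z\<in>A. h z (\<eta>' z)) = (\<Prod>z\<in>A. h z True + h z False)"
  using assms
proof (induction A arbitrary: \<eta> rule: finite_induct)
  case empty
  have "resamplings {} \<eta> = {\<eta>}" by (auto simp: resamplings_def)
  then show ?case by simp
next
  case (insert a A)
  have fix_a: "(\<Sum>\<eta>'\<in>resamplings A (\<eta>(a:=b)). \<Prod>z\<in>insert a A. h z (\<eta>' z))
      = h a b * (\<Prod>z\<in>A. h z True + h z False)" for b
  proof -
    have "(\<Sum>\<eta>'\<in>resamplings A (\<eta>(a:=b)). \<Prod>z\<in>insert a A. h z (\<eta>' z))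
        = (\<Sum>\<eta>'\<in>resamplings A (\<eta>(a:=b)). h a b * (\<Prod>z\<in>A. h z (\<eta>' z)))"
      using insert.hyps by (intro sum.cong) (auto simp: resamplings_def)
    also have "\<dots> = h a b * (\<Prod>z\<in>A. h z True + h z False)"
      by (simp add: sum_distrib_left[symmetric] insert.IH)
    finally show ?thesis .
  qed
  have disjoint: "resamplings A (\<eta>(a:=True)) \<inter> resamplings A (\<eta>(a:=False)) = {}"
    using insert.hyps by (auto simp: resamplings_def)
  have "(\<Sum>\<eta>'\<in>resamplings (insert a A) \<eta>. \<Prod>z\<in>insert a A. h z (\<eta>' z))
      = (\<Sum>\<eta>'\<in>resamplings A (\<eta>(a:=True)). \<Prod>z\<in>insert a A. h z (\<eta>' z))
      + (\<Sum>\<eta>'\<in>resamplings A (\<eta>(a:=False)). \<Prod>z\<in>insert a A. h z (\<eta>' z))"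
    using insert.hyps
    by (simp add: resamplings_insert sum.union_disjoint finite_resamplings disjoint)
  also have "\<dots> = (h a True + h a False) * (\<Prod>z\<in>A. h z True + h z False)"
    by (simp only: fix_a algebra_simps)
  finally show ?case using insert.hyps by simp
qed

definition bernoulli_mean ::
    "real \<Rightarrow> 'a set \<Rightarrow> ('a \<Rightarrow> bool) \<Rightarrow> (('a \<Rightarrow> bool) \<Rightarrow> real) \<Rightarrow> real" where
  "bernoulli_mean p A \<eta> g =
     (\<Sum>\<eta>'\<in>resamplings A \<eta>. (\<Prod>z\<in>A. if \<eta>' z then p else 1 - p) * g \<eta>')"

lemma bernoulli_mean_cong:
  "(\<And>\<eta>'. \<eta>' \<in> resamplings A \<eta> \<Longrightarrow> f \<eta>' = g \<eta>') \<Longrightarrow> bernoulli_mean p A \<eta> f = bernoulli_mean p A \<eta> g"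
  unfolding bernoulli_mean_def by (intro sum.cong) auto

lemma bernoulli_mean_add:
  "bernoulli_mean p A \<eta> (\<lambda>\<eta>'. f \<eta>' + g \<eta>') = bernoulli_mean p A \<eta> f + bernoulli_mean p A \<eta> g"
  by (simp add: bernoulli_mean_def sum.distrib algebra_simps)

lemma bernoulli_mean_diff:
  "bernoulli_mean p A \<eta> (\<lambda>\<eta>'. f \<eta>' - g \<eta>') = bernoulli_mean p A \<eta> f - bernoulli_mean p A \<eta> g"
  by (simp add: bernoulli_mean_def sum_subtractf algebra_simps)

lemma bernoulli_mean_cmult:
  "bernoulli_mean p A \<eta> (\<lambda>\<eta>'. c * f \<eta>') = c * bernoulli_mean p A \<eta> f"
  by (simp add: bernoulli_mean_def sum_distrib_left algebra_simps)

lemma bernoulli_mean_sum: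
  "bernoulli_mean p A \<eta> (\<lambda>\<eta>'. \<Sum>i\<in>I. f i \<eta>') = (\<Sum>i\<in>I. bernoulli_mean p A \<eta> (f i))"
  unfolding bernoulli_mean_def sum_distrib_left by (rule sum.swap)

lemma bernoulli_mean_mono:
  assumes "0 \<le> p" "p \<le> 1" and "\<And>\<eta>'. \<eta>' \<in> resamplings A \<eta> \<Longrightarrow> f \<eta>' \<le> g \<eta>'"
  shows "bernoulli_mean p A \<eta> f \<le> bernoulli_mean p A \<eta> g"
  unfolding bernoulli_mean_def using assms by (intro sum_mono mult_left_mono prod_nonneg) auto

lemma bernoulli_mean_all_zero:
  assumes "finite A" and "S \<subseteq> A"
  shows "bernoulli_mean p A \<eta> (\<lambda>\<eta>'. of_bool (\<forall>y\<in>S. \<not> \<eta>' y)) = (1 - p) ^ card S"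
proof -
  define h where "h z b = (if b then p else 1 - p) * (if z \<in> S then of_bool (\<not> b) else 1)"
    for z b
  have "finite S" using assms finite_subset by blast
  then have indicator_prod:
    "(of_bool (\<forall>y\<in>S. \<not> \<eta>' y) :: real) = (\<Prod>z\<in>A. if z \<in> S then of_bool (\<not> \<eta>' z) else 1)"
    for \<eta>' :: "'a \<Rightarrow> bool"
    using assms by (cases "\<forall>y\<in>S. \<not> \<eta>' y") (auto simp: prod.If_cases Int_absorb1 intro!: prod_zero)
  have "bernoulli_mean p A \<eta> (\<lambda>\<eta>'. of_bool (\<forall>y\<in>S. \<not> \<eta>' y))
      = (\<Sum>\<eta>'\<in>resamplings A \<eta>. \<Prod>z\<in>A. h z (\<eta>' z))"
    unfolding bernoulli_mean_def indicator_prod h_def by (simp add: prod.distrib)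
  also have "\<dots> = (\<Prod>z\<in>A. if z \<in> S then 1 - p else 1)"
    unfolding sum_prod_resamplings[OF assms(1)] by (intro prod.cong) (auto simp: h_def)
  also have "\<dots> = (1 - p) ^ card S"
    using assms by (simp add: prod.If_cases Int_absorb1)
  finally show ?thesis .
qed

lemma bernoulli_mean_const: "finite A \<Longrightarrow> bernoulli_mean p A \<eta> (\<lambda>_. c) = c"
  using bernoulli_mean_all_zero[of A "{}" p \<eta>] bernoulli_mean_cmult[of p A \<eta> c "\<lambda>_. 1"] by simp

section \<open>Stationary chains and Lyapunov functions\<close>

lemma stationary_generator_sum_eq_0:
  fixes \<pi> g :: "'s \<Rightarrow> real" and r :: "'s \<Rightarrow> 's \<Rightarrow> real"
  assumes balance: "\<forall>\<eta>'\<in>C. (\<Sum>\<eta>\<in>C. \<pi> \<eta> * r \<eta> \<eta>') = \<pi> \<eta>' * (\<Sum>\<eta>\<in>C. r \<eta>' \<eta>)"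
  shows "(\<Sum>\<eta>\<in>C. \<pi> \<eta> * (\<Sum>\<eta>'\<in>C. r \<eta> \<eta>' * (g \<eta>' - g \<eta>))) = 0"
proof -
  have "(\<Sum>\<eta>\<in>C. \<Sum>\<eta>'\<in>C. \<pi> \<eta> * r \<eta> \<eta>' * g \<eta>') = (\<Sum>\<eta>'\<in>C. g \<eta>' * (\<Sum>\<eta>\<in>C. \<pi> \<eta> * r \<eta> \<eta>'))"
    by (subst sum.swap) (simp add: sum_distrib_left algebra_simps)
  also have "\<dots> = (\<Sum>\<eta>'\<in>C. g \<eta>' * \<pi> \<eta>' * (\<Sum>\<eta>\<in>C. r \<eta>' \<eta>))"
    using balance by (simp add: algebra_simps)
  finally show ?thesis
    by (simp add: sum_distrib_left sum_subtractf right_diff_distrib algebra_simps)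
qed

lemma foster_lyapunov_bound:
  fixes \<pi> f :: "'s \<Rightarrow> real" and r :: "'s \<Rightarrow> 's \<Rightarrow> real" and c B :: real
  assumes "finite C" and "\<eta>\<^sub>0 \<in> C" and "c > 0"
    and balance: "\<forall>\<eta>'\<in>C. (\<Sum>\<eta>\<in>C. \<pi> \<eta> * r \<eta> \<eta>') = \<pi> \<eta>' * (\<Sum>\<eta>\<in>C. r \<eta>' \<eta>)"
    and nonneg: "\<And>\<eta>. \<eta> \<in> C \<Longrightarrow> 0 \<le> \<pi> \<eta>"
    and drift: "\<And>\<eta>. \<eta> \<in> C - {\<eta>\<^sub>0} \<Longrightarrow> (\<Sum>\<eta>'\<in>C. r \<eta> \<eta>' * (f \<eta>' - f \<eta>)) \<le> - c * f \<eta>"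
    and exit: "\<pi> \<eta>\<^sub>0 * (\<Sum>\<eta>'\<in>C. r \<eta>\<^sub>0 \<eta>' * (f \<eta>' - f \<eta>\<^sub>0)) \<le> B"
  shows "(\<Sum>\<eta>\<in>C - {\<eta>\<^sub>0}. \<pi> \<eta> * f \<eta>) \<le> B / c"
proof -
  let ?L = "\<lambda>\<eta>. \<Sum>\<eta>'\<in>C. r \<eta> \<eta>' * (f \<eta>' - f \<eta>)"
  have "0 = (\<Sum>\<eta>\<in>C. \<pi> \<eta> * ?L \<eta>)"
    using stationary_generator_sum_eq_0[OF balance] by simp
  also have "\<dots> = \<pi> \<eta>\<^sub>0 * ?L \<eta>\<^sub>0 + (\<Sum>\<eta>\<in>C - {\<eta>\<^sub>0}. \<pi> \<eta> * ?L \<eta>)"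
    using assms(1,2) by (rule sum.remove)
  also have "\<dots> \<le> B + (\<Sum>\<eta>\<in>C - {\<eta>\<^sub>0}. \<pi> \<eta> * (- c * f \<eta>))"
    using exit nonneg drift by (intro add_mono sum_mono mult_left_mono) auto
  finally have "c * (\<Sum>\<eta>\<in>C - {\<eta>\<^sub>0}. \<pi> \<eta> * f \<eta>) \<le> B"
    by (simp add: sum_distrib_left algebra_simps sum_negf)
  then show ?thesis using \<open>c > 0\<close> by (simp add: field_simps)
qed

lemma exp_le_1_plus_sq:
  fixes t :: real
  assumes "\<bar>t\<bar> \<le> 1"
  shows "exp t \<le> 1 + t + t\<^sup>2"
proof (cases "t \<ge> 0")
  case True
  then show ?thesis using exp_bound[of t] assms by simp
next
  case False
  have "1 - t \<le> exp (- t)" using exp_ge_add_one_self[of "- t"] by simp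
  then have "exp t \<le> 1 / (1 - t)" using False by (simp add: exp_minus field_simps)
  also have "\<dots> \<le> 1 + t + t\<^sup>2"
  proof -
    have "(1 - t) * (1 + t + t\<^sup>2) = 1 - t ^ 3"
      by (simp add: algebra_simps power2_eq_square power3_eq_cube)
    moreover have "t ^ 3 < 0" using False by (simp add: power_less_zero_eq)
    ultimately have "1 \<le> (1 + t + t\<^sup>2) * (1 - t)" by (simp add: mult.commute)
    then show ?thesis using False by (simp add: divide_le_eq)
  qed
  finally show ?thesis .
qed

section \<open>Constants depending on the maximal degree\<close>

definition q0_bound :: "nat \<Rightarrow> real" where
  "q0_bound d = 1 / (real d + 1) + 1 / (32 * (real d + 1) ^ 3)"

definition drift_gap :: "nat \<Rightarrow> real" where
  "drift_gap d = 1 / (32 * (real d + 1)\<^sup>2)"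

lemma q0_bound_gt: "1 / (real d + 1) < q0_bound d"
  by (simp add: q0_bound_def)

lemma drift_gap_pos: "0 < drift_gap d"
  by (simp add: drift_gap_def)

lemma q0_bound_mult: "q0_bound d * (real d + 1) = 1 + drift_gap d"
proof -
  have "(1 / D + 1 / (32 * D ^ 3)) * D = 1 + 1 / (32 * D\<^sup>2)" if "D > 0" for D :: real
    using that by (simp add: field_simps power3_eq_cube power2_eq_square)
  from this[of "real d + 1"] show ?thesis by (simp add: q0_bound_def drift_gap_def)
qed

lemma drift_gap_le: "drift_gap d \<le> 1 / 32"
proof -
  have "1 \<le> (real d + 1)\<^sup>2" by (simp add: one_le_power)
  then have "1 / (32 * (real d + 1)\<^sup>2) \<le> 1 / (32 * 1)" by (intro divide_left_mono) auto
  then show ?thesis by (simp add: drift_gap_def)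
qed

lemma quadratic_drift_le:
  fixes q :: real
  assumes "d \<ge> 1" and "0 < q" and qD: "q * (real d + 1) \<le> 1 + drift_gap d"
  shows "q * (real d + 1) - 1 - q\<^sup>2 / 8 \<le> - drift_gap d"
proof (cases "q * (real d + 1) \<le> 1 - drift_gap d")
  case True
  moreover have "0 \<le> q\<^sup>2 / 8" by simp
  ultimately show ?thesis by linarith
next
  case False
  define D where "D = real d + 1"
  have "2 \<le> D" using \<open>d \<ge> 1\<close> by (simp add: D_def)
  have "q * D \<ge> 3 / 4" using False drift_gap_le[of d] by (simp add: D_def)
  then have "(q * D)\<^sup>2 \<ge> (3 / 4)\<^sup>2" by (intro power_mono) auto
  then have "q\<^sup>2 / 8 \<ge> 2 * (1 / (32 * D\<^sup>2))"
    using \<open>2 \<le> D\<close> by (simp add: field_simps power_mult_distrib)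
  then show ?thesis using qD by (simp add: drift_gap_def D_def)
qed

text \<open>Small enough that the second-order term of \<open>exp\<close> costs at most half of the drift gap.\<close>

definition lyapunov_rate :: "nat \<Rightarrow> real" where
  "lyapunov_rate d = drift_gap d / (8 * (real d + 1)\<^sup>2)"

lemma lyapunov_rate_pos: "0 < lyapunov_rate d"
  using drift_gap_pos by (simp add: lyapunov_rate_def)

lemma lyapunov_rate_bounds:
  "lyapunov_rate d * (2 * (real d + 1)) \<le> 1"
  "lyapunov_rate d * (4 * (real d + 1)\<^sup>2) = drift_gap d / 2"
proof -
  define D where "D = real d + 1"
  have "1 \<le> D" by (simp add: D_def)
  then have "1 \<le> D ^ 3" by (rule one_le_power)
  then have "1 \<le> 128 * D ^ 3" by linarith
  then have "1 / (128 * D ^ 3) \<le> 1 / 1" using \<open>1 \<le> D\<close> by (intro divide_left_mono) auto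
  moreover have "lyapunov_rate d * (2 * D) = 1 / (128 * D ^ 3)"
    using \<open>1 \<le> D\<close> by (simp add: lyapunov_rate_def drift_gap_def D_def[symmetric] power2_eq_square power3_eq_cube)
  ultimately show "lyapunov_rate d * (2 * (real d + 1)) \<le> 1" by (simp add: D_def)
  show "lyapunov_rate d * (4 * (real d + 1)\<^sup>2) = drift_gap d / 2"
    by (simp add: lyapunov_rate_def field_simps)
qed

text \<open>The Foster-Lyapunov bound \<open>B / c\<close> for \<open>\<theta> = lyapunov_rate d\<close>, where
  \<open>B = (d + 1) (exp (\<theta> (d + 1)) - 1)\<close> bounds the term of the all-ones state and
  \<open>c = \<theta> drift_gap d / 2\<close> is the rate of exponential drift elsewhere.\<close>

definition tail_const :: "nat \<Rightarrow> real" where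
  "tail_const d = 2 * (real d + 1) * (exp (lyapunov_rate d * (real d + 1)) - 1) / (lyapunov_rate d * drift_gap d)"

definition tail_rate :: "nat \<Rightarrow> real" where
  "tail_rate d = 7 / 8 * lyapunov_rate d"

lemma tail_const_pos: "0 < tail_const d"
  using lyapunov_rate_pos drift_gap_pos by (simp add: tail_const_def)

lemma tail_rate_pos: "0 < tail_rate d"
  using lyapunov_rate_pos by (simp add: tail_rate_def)

locale graph_max_degree =
  fixes V :: "nat set" and E :: "nat \<Rightarrow> nat \<Rightarrow> bool" and d :: nat
  assumes graph: "conn_simple_graph V E" and max_deg: "max_degree V E = d"
begin

lemma finite_V: "finite V"
  using graph by (simp add: conn_simple_graph_def)

lemma edge_sym: "E x y \<Longrightarrow> E y x"
  using graph by (simp add: conn_simple_graph_def)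

lemma edge_irrefl: "\<not> E x x"
  using graph by (simp add: conn_simple_graph_def)

lemma edge_in_V: "E x y \<Longrightarrow> x \<in> V" "E x y \<Longrightarrow> y \<in> V"
  using graph by (simp_all add: conn_simple_graph_def)

lemma degree_le: "x \<in> V \<Longrightarrow> card {y\<in>V. E x y} \<le> d"
  using max_deg finite_V unfolding max_degree_def by (auto intro: Max_ge)

lemma nbhd_subset: "x \<in> V \<Longrightarrow> nbhd V E x \<subseteq> V"
  by (auto simp: nbhd_def)

lemma finite_nbhd: "finite (nbhd V E x)"
  using finite_V by (simp add: nbhd_def)

lemma self_in_nbhd: "x \<in> nbhd V E x"
  by (simp add: nbhd_def)

lemma nbhd_sym: "x \<in> V \<Longrightarrow> y \<in> nbhd V E x \<longleftrightarrow> x \<in> nbhd V E y"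
  by (auto simp: nbhd_def dest: edge_sym edge_in_V)

lemma card_nbhd: "card (nbhd V E x) = Suc (card {y\<in>V. E x y})"
  using finite_V edge_irrefl by (simp add: nbhd_def)

lemma card_nbhd_le: "x \<in> V \<Longrightarrow> card (nbhd V E x) \<le> d + 1"
  using card_nbhd degree_le by simp

lemma sum_of_bool_nbhd:
  assumes "x \<in> V"
  shows "(\<Sum>u\<in>V. of_bool (u \<in> nbhd V E x \<and> P u)) = (\<Sum>u\<in>nbhd V E x. of_bool (P u) :: real)"
proof -
  have "V \<inter> {u. u \<in> nbhd V E x \<and> P u} = nbhd V E x \<inter> {u. P u}"
    using nbhd_subset[OF assms] by blast
  then show ?thesis using finite_V finite_nbhd by simp
qed

lemma sum_of_bool_mem_nbhd_le: "x \<in> V \<Longrightarrow> (\<Sum>u\<in>V. of_bool (u \<in> nbhd V E x)) \<le> real d + 1"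
  using sum_of_bool_nbhd[of x "\<lambda>_. True"] card_nbhd_le[of x] by simp

lemma sum_degree_le: "u \<in> V \<Longrightarrow> (\<Sum>v\<in>V. of_bool (E u v)) \<le> real d"
  using finite_V degree_le by (simp add: Collect_conj_eq)

lemma sum_edges_touching_le:
  "(\<Sum>u\<in>V. \<Sum>v\<in>V. of_bool (E u v \<and> (Z u \<or> Z v))) \<le> 2 * real d * (\<Sum>u\<in>V. of_bool (Z u))"
proof -
  have one_end: "(\<Sum>u\<in>V. \<Sum>v\<in>V. of_bool (Z u \<and> E u v)) \<le> real d * (\<Sum>u\<in>V. of_bool (Z u))"
  proof -
    have "(\<Sum>u\<in>V. \<Sum>v\<in>V. of_bool (Z u \<and> E u v))
        = (\<Sum>u\<in>V. of_bool (Z u) * (\<Sum>v\<in>V. of_bool (E u v)) :: real)"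
      unfolding sum_distrib_left by (intro sum.cong refl) auto
    also have "\<dots> \<le> (\<Sum>u\<in>V. of_bool (Z u) * real d)"
      by (intro sum_mono mult_left_mono sum_degree_le) auto
    finally show ?thesis by (simp add: sum_distrib_left mult.commute)
  qed
  have other_end: "(\<Sum>u\<in>V. \<Sum>v\<in>V. of_bool (Z v \<and> E u v))
      = (\<Sum>u\<in>V. \<Sum>v\<in>V. of_bool (Z u \<and> E u v) :: real)"
    by (subst sum.swap) (intro sum.cong refl, use edge_sym in auto)
  have "(\<Sum>u\<in>V. \<Sum>v\<in>V. of_bool (E u v \<and> (Z u \<or> Z v)))
      \<le> (\<Sum>u\<in>V. \<Sum>v\<in>V. of_bool (Z u \<and> E u v) + of_bool (Z v \<and> E u v) :: real)"
    by (intro sum_mono) auto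
  also have "\<dots> = (\<Sum>u\<in>V. \<Sum>v\<in>V. of_bool (Z u \<and> E u v)) + (\<Sum>u\<in>V. \<Sum>v\<in>V. of_bool (Z v \<and> E u v))"
    by (simp only: sum.distrib)
  finally show ?thesis using one_end other_end by linarith
qed

end

section \<open>The Bak-Sneppen generator\<close>

locale bak_sneppen = graph_max_degree +
  fixes p :: real
  assumes degree_pos: "d \<ge> 1" and p_pos: "0 < p" and p_less_1: "p < 1"
begin

lemma configs_eq_image: "configs V = (\<lambda>S z. z \<in> S) ` Pow V"
proof
  show "configs V \<subseteq> (\<lambda>S z. z \<in> S) ` Pow V"
  proof
    fix \<eta> assume "\<eta> \<in> configs V"
    then have "{y. \<eta> y} \<subseteq> V" by (auto simp: configs_def)
    then show "\<eta> \<in> (\<lambda>S z. z \<in> S) ` Pow V" by (intro image_eqI[of _ _ "{y. \<eta> y}"]) auto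
  qed
qed (auto simp: configs_def)

lemma finite_configs: "finite (configs V)"
  using finite_V by (simp add: configs_eq_image)

lemma resamplings_nbhd_subset_configs:
  "\<eta> \<in> configs V \<Longrightarrow> x \<in> V \<Longrightarrow> resamplings (nbhd V E x) \<eta> \<subseteq> configs V"
  using nbhd_subset by (auto simp: resamplings_def configs_def)

abbreviation ring_mean :: "nat \<Rightarrow> (nat \<Rightarrow> bool) \<Rightarrow> ((nat \<Rightarrow> bool) \<Rightarrow> real) \<Rightarrow> real" where
  "ring_mean x \<equiv> bernoulli_mean p (nbhd V E x)"

lemma ring_mean_mono:
  "(\<And>\<eta>'. \<eta>' \<in> resamplings (nbhd V E x) \<eta> \<Longrightarrow> f \<eta>' \<le> g \<eta>') \<Longrightarrow> ring_mean x \<eta> f \<le> ring_mean x \<eta> g"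
  using p_pos p_less_1 by (intro bernoulli_mean_mono) auto

lemma ring_mean_const: "ring_mean x \<eta> (\<lambda>_. c) = c"
  using finite_nbhd by (rule bernoulli_mean_const)

definition clock_effective :: "(nat \<Rightarrow> bool) \<Rightarrow> nat \<Rightarrow> bool" where
  "clock_effective \<eta> x \<longleftrightarrow> \<not> \<eta> x \<or> (\<forall>y\<in>V. \<eta> y)"

lemma bs_rate_nonneg: "0 \<le> bs_rate V E p \<eta> \<eta>'"
  unfolding bs_rate_def using p_pos p_less_1 by (intro sum_nonneg) (auto intro: prod_nonneg)

lemma generator_eq_sum_ring_mean:
  assumes "\<eta> \<in> configs V"
  shows "(\<Sum>\<eta>'\<in>configs V. bs_rate V E p \<eta> \<eta>' * g \<eta>')
       = (\<Sum>x\<in>V. if clock_effective \<eta> x then ring_mean x \<eta> g else 0)"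
proof -
  let ?w = "\<lambda>x \<eta>'. \<Prod>z\<in>nbhd V E x. if \<eta>' z then p else 1 - p"
  let ?R = "\<lambda>x. resamplings (nbhd V E x) \<eta>"
  have summand: "(if (\<not> \<eta> x \<or> (\<forall>y\<in>V. \<eta> y)) \<and> (\<forall>z. z \<notin> nbhd V E x \<longrightarrow> \<eta>' z = \<eta> z)
        then ?w x \<eta>' else 0) * g \<eta>'
      = (if clock_effective \<eta> x \<and> \<eta>' \<in> ?R x then ?w x \<eta>' * g \<eta>' else 0)" for x \<eta>'
  proof -
    have "(\<not> \<eta> x \<or> (\<forall>y\<in>V. \<eta> y)) \<and> (\<forall>z. z \<notin> nbhd V E x \<longrightarrow> \<eta>' z = \<eta> z)
        \<longleftrightarrow> clock_effective \<eta> x \<and> \<eta>' \<in> ?R x"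
      by (simp add: clock_effective_def resamplings_def)
    then show ?thesis by simp
  qed
  have "(\<Sum>\<eta>'\<in>configs V. bs_rate V E p \<eta> \<eta>' * g \<eta>')
     = (\<Sum>\<eta>'\<in>configs V. \<Sum>x\<in>V.
          if clock_effective \<eta> x \<and> \<eta>' \<in> ?R x then ?w x \<eta>' * g \<eta>' else 0)"
    unfolding bs_rate_def sum_distrib_right summand ..
  also have "\<dots> = (\<Sum>x\<in>V. \<Sum>\<eta>'\<in>configs V.
          if clock_effective \<eta> x \<and> \<eta>' \<in> ?R x then ?w x \<eta>' * g \<eta>' else 0)"
    by (rule sum.swap)
  also have "\<dots> = (\<Sum>x\<in>V. if clock_effective \<eta> x then ring_mean x \<eta> g else 0)"
  proof (intro sum.cong refl)
    fix x assume "x \<in> V"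
    then have "{\<eta>'\<in>configs V. \<eta>' \<in> ?R x} = ?R x"
      using resamplings_nbhd_subset_configs[OF assms] by blast
    then show "(\<Sum>\<eta>'\<in>configs V.
          if clock_effective \<eta> x \<and> \<eta>' \<in> ?R x then ?w x \<eta>' * g \<eta>' else 0)
        = (if clock_effective \<eta> x then ring_mean x \<eta> g else 0)"
      using finite_configs by (simp add: sum.inter_filter[symmetric] bernoulli_mean_def)
  qed
  finally show ?thesis .
qed

definition zero_count :: "(nat \<Rightarrow> bool) \<Rightarrow> real" where
  "zero_count \<eta> = (\<Sum>y\<in>V. of_bool (\<not> \<eta> y))"

text \<open>Every edge is counted twice, as \<open>(u, v)\<close> and \<open>(v, u)\<close>.\<close>

definition zero_edges :: "(nat \<Rightarrow> bool) \<Rightarrow> real" where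
  "zero_edges \<eta> = (\<Sum>u\<in>V. \<Sum>v\<in>V. of_bool (E u v \<and> \<not> \<eta> u \<and> \<not> \<eta> v))"

definition edge_weight :: real where
  "edge_weight = 1 / (8 * real d)"

definition potential :: "(nat \<Rightarrow> bool) \<Rightarrow> real" where
  "potential \<eta> = zero_count \<eta> - edge_weight * zero_edges \<eta>"

lemma zero_count_eq_card: "zero_count \<eta> = real (card (zeros V \<eta>))"
  unfolding zero_count_def zeros_def using finite_V by (simp add: Collect_conj_eq)

lemma edge_weight_pos: "0 < edge_weight"
  using degree_pos by (simp add: edge_weight_def)

lemma edge_weight_mult_degree: "edge_weight * real d = 1 / 8"
  using degree_pos by (simp add: edge_weight_def)

lemma zero_edges_nonneg: "0 \<le> zero_edges \<eta>"
  unfolding zero_edges_def by (intro sum_nonneg) simp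

lemma zero_edges_le: "zero_edges \<eta> \<le> real d * zero_count \<eta>"
proof -
  have "zero_edges \<eta> = (\<Sum>u\<in>V. of_bool (\<not> \<eta> u) * (\<Sum>v\<in>V. of_bool (E u v \<and> \<not> \<eta> v)))"
    unfolding zero_edges_def sum_distrib_left by (intro sum.cong refl) auto
  also have "\<dots> \<le> (\<Sum>u\<in>V. of_bool (\<not> \<eta> u) * real d)"
  proof (intro sum_mono mult_left_mono)
    fix u assume "u \<in> V"
    have "(\<Sum>v\<in>V. of_bool (E u v \<and> \<not> \<eta> v)) \<le> (\<Sum>v\<in>V. of_bool (E u v) :: real)"
      by (intro sum_mono) auto
    then show "(\<Sum>v\<in>V. of_bool (E u v \<and> \<not> \<eta> v)) \<le> real d"
      using sum_degree_le[OF \<open>u \<in> V\<close>] by linarith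
  qed simp
  finally show ?thesis by (simp add: zero_count_def sum_distrib_left mult.commute)
qed

lemma potential_ge: "7/8 * zero_count \<eta> \<le> potential \<eta>"
proof -
  have "edge_weight * zero_edges \<eta> \<le> edge_weight * real d * zero_count \<eta>"
    using zero_edges_le edge_weight_pos by (simp add: mult.assoc)
  then show ?thesis unfolding potential_def edge_weight_mult_degree by simp
qed

lemma potential_le: "potential \<eta> \<le> zero_count \<eta>"
  unfolding potential_def using zero_edges_nonneg edge_weight_pos by simp

lemma zero_count_resample_diff:
  assumes "x \<in> V" and "\<eta>' \<in> resamplings (nbhd V E x) \<eta>"
  shows "zero_count \<eta>' - zero_count \<eta> = (\<Sum>y\<in>nbhd V E x. of_bool (\<not> \<eta>' y) - of_bool (\<not> \<eta> y))"
proof -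
  have split: "zero_count \<zeta> = (\<Sum>y\<in>nbhd V E x. of_bool (\<not> \<zeta> y)) + (\<Sum>y\<in>V - nbhd V E x. of_bool (\<not> \<zeta> y))"
    for \<zeta>
    unfolding zero_count_def using sum.subset_diff[OF nbhd_subset[OF assms(1)] finite_V]
    by (simp add: add.commute)
  have "(\<Sum>y\<in>V - nbhd V E x. of_bool (\<not> \<eta>' y)) = (\<Sum>y\<in>V - nbhd V E x. of_bool (\<not> \<eta> y) :: real)"
    using assms(2) by (intro sum.cong) (auto simp: resamplings_def)
  then show ?thesis unfolding split by (simp add: sum_subtractf)
qed

lemma zero_count_resample_diff_abs:
  assumes "x \<in> V" and "\<eta>' \<in> resamplings (nbhd V E x) \<eta>"
  shows "\<bar>zero_count \<eta>' - zero_count \<eta>\<bar> \<le> real d + 1"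
proof -
  have "\<bar>zero_count \<eta>' - zero_count \<eta>\<bar> \<le> (\<Sum>y\<in>nbhd V E x. \<bar>of_bool (\<not> \<eta>' y) - of_bool (\<not> \<eta> y)\<bar>)"
    unfolding zero_count_resample_diff[OF assms] by (rule sum_abs)
  also have "\<dots> \<le> (\<Sum>y\<in>nbhd V E x. 1)" by (intro sum_mono) auto
  also have "\<dots> \<le> real d + 1" using card_nbhd_le[OF assms(1)] by simp
  finally show ?thesis .
qed

definition zero_edges_near :: "(nat \<Rightarrow> bool) \<Rightarrow> nat \<Rightarrow> real" where
  "zero_edges_near \<eta> x =
     (\<Sum>u\<in>V. \<Sum>v\<in>V. of_bool (E u v \<and> \<not> \<eta> u \<and> \<not> \<eta> v \<and> (u \<in> nbhd V E x \<or> v \<in> nbhd V E x)))"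

lemma zero_edges_resample_diff_ge:
  assumes "x \<in> V" and \<eta>': "\<eta>' \<in> resamplings (nbhd V E x) \<eta>"
  shows "(\<Sum>v\<in>V. of_bool (E x v \<and> \<not> \<eta>' x \<and> \<not> \<eta>' v)) - zero_edges_near \<eta> x
           \<le> zero_edges \<eta>' - zero_edges \<eta>"
proof -
  let ?near = "\<lambda>u v. u \<in> nbhd V E x \<or> v \<in> nbhd V E x"
  have "(\<Sum>v\<in>V. of_bool (E x v \<and> \<not> \<eta>' x \<and> \<not> \<eta>' v)) - zero_edges_near \<eta> x
      = (\<Sum>u\<in>V. \<Sum>v\<in>V. (if u = x then of_bool (E x v \<and> \<not> \<eta>' x \<and> \<not> \<eta>' v) else 0)
          - of_bool (E u v \<and> \<not> \<eta> u \<and> \<not> \<eta> v \<and> ?near u v))"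
  proof -
    have "(\<Sum>u\<in>V. \<Sum>v\<in>V. (if u = x then of_bool (E x v \<and> \<not> \<eta>' x \<and> \<not> \<eta>' v) else 0))
        = (\<Sum>v\<in>V. of_bool (E x v \<and> \<not> \<eta>' x \<and> \<not> \<eta>' v) :: real)"
      by (subst sum.swap) (simp add: sum.delta finite_V assms(1))
    then show ?thesis unfolding zero_edges_near_def sum_subtractf by simp
  qed
  also have "\<dots> \<le> (\<Sum>u\<in>V. \<Sum>v\<in>V. of_bool (E u v \<and> \<not> \<eta>' u \<and> \<not> \<eta>' v) - of_bool (E u v \<and> \<not> \<eta> u \<and> \<not> \<eta> v))"
  proof (intro sum_mono)
    fix u v
    show "(if u = x then of_bool (E x v \<and> \<not> \<eta>' x \<and> \<not> \<eta>' v) else 0)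
          - of_bool (E u v \<and> \<not> \<eta> u \<and> \<not> \<eta> v \<and> ?near u v)
        \<le> of_bool (E u v \<and> \<not> \<eta>' u \<and> \<not> \<eta>' v) - (of_bool (E u v \<and> \<not> \<eta> u \<and> \<not> \<eta> v) :: real)"
    proof (cases "?near u v")
      case False
      then have "\<eta>' u = \<eta> u" "\<eta>' v = \<eta> v" "u \<noteq> x"
        using \<eta>' self_in_nbhd[of x] by (auto simp: resamplings_def)
      then show ?thesis using False by auto
    qed auto
  qed
  also have "\<dots> = zero_edges \<eta>' - zero_edges \<eta>" unfolding zero_edges_def by (simp add: sum_subtractf)
  finally show ?thesis .
qed

lemma zero_edges_resample_diff_abs:
  assumes "x \<in> V" and \<eta>': "\<eta>' \<in> resamplings (nbhd V E x) \<eta>"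
  shows "\<bar>zero_edges \<eta>' - zero_edges \<eta>\<bar> \<le> 2 * real d * (real d + 1)"
proof -
  let ?near = "\<lambda>u v. u \<in> nbhd V E x \<or> v \<in> nbhd V E x"
  have "\<bar>zero_edges \<eta>' - zero_edges \<eta>\<bar>
      \<le> (\<Sum>u\<in>V. \<Sum>v\<in>V. \<bar>of_bool (E u v \<and> \<not> \<eta>' u \<and> \<not> \<eta>' v) - of_bool (E u v \<and> \<not> \<eta> u \<and> \<not> \<eta> v)\<bar>)"
    unfolding zero_edges_def sum_subtractf[symmetric]
    by (rule order_trans[OF sum_abs sum_mono[OF sum_abs]])
  also have "\<dots> \<le> (\<Sum>u\<in>V. \<Sum>v\<in>V. of_bool (E u v \<and> ?near u v))"
  proof (intro sum_mono)
    fix u v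
    show "\<bar>of_bool (E u v \<and> \<not> \<eta>' u \<and> \<not> \<eta>' v) - of_bool (E u v \<and> \<not> \<eta> u \<and> \<not> \<eta> v)\<bar>
        \<le> (of_bool (E u v \<and> ?near u v) :: real)"
    proof (cases "?near u v")
      case False
      then have "\<eta>' u = \<eta> u" "\<eta>' v = \<eta> v" using \<eta>' by (auto simp: resamplings_def)
      then show ?thesis by auto
    qed auto
  qed
  also have "\<dots> \<le> 2 * real d * (\<Sum>u\<in>V. of_bool (u \<in> nbhd V E x))"
    by (rule sum_edges_touching_le)
  also have "\<dots> \<le> 2 * real d * (real d + 1)"
    using sum_of_bool_mem_nbhd_le[OF assms(1)] by (intro mult_left_mono) auto
  finally show ?thesis .
qed

lemma potential_resample_diff_abs:
  assumes "x \<in> V" and "\<eta>' \<in> resamplings (nbhd V E x) \<eta>"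
  shows "\<bar>potential \<eta>' - potential \<eta>\<bar> \<le> 2 * (real d + 1)"
proof -
  have "potential \<eta>' - potential \<eta>
      = (zero_count \<eta>' - zero_count \<eta>) - edge_weight * (zero_edges \<eta>' - zero_edges \<eta>)"
    unfolding potential_def by (simp add: algebra_simps)
  then have triangle: "\<bar>potential \<eta>' - potential \<eta>\<bar>
      \<le> \<bar>zero_count \<eta>' - zero_count \<eta>\<bar> + edge_weight * \<bar>zero_edges \<eta>' - zero_edges \<eta>\<bar>"
    using abs_triangle_ineq4[of "zero_count \<eta>' - zero_count \<eta>" "edge_weight * (zero_edges \<eta>' - zero_edges \<eta>)"]
      edge_weight_pos by (simp add: abs_mult)
  have "edge_weight * \<bar>zero_edges \<eta>' - zero_edges \<eta>\<bar> \<le> edge_weight * (2 * real d * (real d + 1))"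
    using zero_edges_resample_diff_abs[OF assms] edge_weight_pos by (intro mult_left_mono) auto
  also have "\<dots> = (real d + 1) / 4"
    using edge_weight_mult_degree by (simp add: algebra_simps)
  finally show ?thesis
    using triangle zero_count_resample_diff_abs[OF assms] by (simp add: field_simps)
qed

subsection \<open>Drift of the potential\<close>

lemma ring_mean_zero_count_diff:
  assumes "x \<in> V"
  shows "ring_mean x \<eta> (\<lambda>\<eta>'. zero_count \<eta>' - zero_count \<eta>)
       = (1 - p) * (1 + real (card {y\<in>V. E x y})) - (\<Sum>y\<in>nbhd V E x. of_bool (\<not> \<eta> y))"
proof -
  have "ring_mean x \<eta> (\<lambda>\<eta>'. zero_count \<eta>' - zero_count \<eta>)
      = ring_mean x \<eta> (\<lambda>\<eta>'. \<Sum>y\<in>nbhd V E x. of_bool (\<not> \<eta>' y) - of_bool (\<not> \<eta> y))"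
    using assms by (intro bernoulli_mean_cong zero_count_resample_diff)
  also have "\<dots> = (\<Sum>y\<in>nbhd V E x. (1 - p) - of_bool (\<not> \<eta> y))"
    using bernoulli_mean_all_zero[OF finite_nbhd, of "{y}" x p \<eta> for y]
    by (simp add: bernoulli_mean_sum bernoulli_mean_diff ring_mean_const)
  finally show ?thesis by (simp add: sum_subtractf card_nbhd)
qed

lemma ring_mean_zero_edges_diff_ge:
  assumes "x \<in> V"
  shows "(1 - p)\<^sup>2 * real (card {y\<in>V. E x y}) - zero_edges_near \<eta> x
       \<le> ring_mean x \<eta> (\<lambda>\<eta>'. zero_edges \<eta>' - zero_edges \<eta>)"
proof -
  have pair: "ring_mean x \<eta> (\<lambda>\<eta>'. of_bool (E x v \<and> \<not> \<eta>' x \<and> \<not> \<eta>' v)) = (1 - p)\<^sup>2 * of_bool (E x v)"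
    if "v \<in> V" for v
  proof (cases "E x v")
    case True
    moreover have "x \<noteq> v" using True edge_irrefl by blast
    ultimately have "{x, v} \<subseteq> nbhd V E x" "card {x, v} = 2"
      using that by (auto simp: nbhd_def)
    then show ?thesis
      using True bernoulli_mean_all_zero[OF finite_nbhd, of "{x, v}" x p \<eta>] by simp
  qed (simp add: ring_mean_const)
  have "ring_mean x \<eta> (\<lambda>\<eta>'. (\<Sum>v\<in>V. of_bool (E x v \<and> \<not> \<eta>' x \<and> \<not> \<eta>' v)) - zero_edges_near \<eta> x)
      \<le> ring_mean x \<eta> (\<lambda>\<eta>'. zero_edges \<eta>' - zero_edges \<eta>)"
    using assms by (intro ring_mean_mono zero_edges_resample_diff_ge)
  moreover have "ring_mean x \<eta> (\<lambda>\<eta>'. (\<Sum>v\<in>V. of_bool (E x v \<and> \<not> \<eta>' x \<and> \<not> \<eta>' v)) - zero_edges_near \<eta> x)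
      = (\<Sum>v\<in>V. ring_mean x \<eta> (\<lambda>\<eta>'. of_bool (E x v \<and> \<not> \<eta>' x \<and> \<not> \<eta>' v))) - zero_edges_near \<eta> x"
    by (simp only: bernoulli_mean_diff bernoulli_mean_sum ring_mean_const)
  moreover have "(\<Sum>v\<in>V. ring_mean x \<eta> (\<lambda>\<eta>'. of_bool (E x v \<and> \<not> \<eta>' x \<and> \<not> \<eta>' v)))
      = (\<Sum>v\<in>V. (1 - p)\<^sup>2 * of_bool (E x v))"
    by (rule sum.cong[OF refl pair])
  moreover have "(\<Sum>v\<in>V. (1 - p)\<^sup>2 * of_bool (E x v)) = (1 - p)\<^sup>2 * real (card {y\<in>V. E x y})"
    using finite_V by (simp add: sum_distrib_left[symmetric] Collect_conj_eq)
  ultimately show ?thesis by linarith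
qed

lemma ring_mean_potential_diff_le:
  assumes "x \<in> V"
  shows "ring_mean x \<eta> (\<lambda>\<eta>'. potential \<eta>' - potential \<eta>)
       \<le> (1 - p) * (1 + real (card {y\<in>V. E x y})) - (\<Sum>y\<in>nbhd V E x. of_bool (\<not> \<eta> y))
         - edge_weight * ((1 - p)\<^sup>2 * real (card {y\<in>V. E x y}) - zero_edges_near \<eta> x)"
proof -
  have "ring_mean x \<eta> (\<lambda>\<eta>'. potential \<eta>' - potential \<eta>)
      = ring_mean x \<eta> (\<lambda>\<eta>'. (zero_count \<eta>' - zero_count \<eta>) - edge_weight * (zero_edges \<eta>' - zero_edges \<eta>))"
    unfolding potential_def by (simp add: algebra_simps)
  also have "\<dots> = ring_mean x \<eta> (\<lambda>\<eta>'. zero_count \<eta>' - zero_count \<eta>)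
        - edge_weight * ring_mean x \<eta> (\<lambda>\<eta>'. zero_edges \<eta>' - zero_edges \<eta>)"
    by (simp only: bernoulli_mean_diff bernoulli_mean_cmult)
  finally show ?thesis
    using ring_mean_zero_count_diff[OF assms] ring_mean_zero_edges_diff_ge[OF assms, of \<eta>]
      edge_weight_pos by (simp add: mult_left_mono)
qed

lemma zero_edges_near_eq_0:
  assumes "\<forall>y\<in>nbhd V E x. y \<noteq> x \<longrightarrow> \<eta> y"
  shows "zero_edges_near \<eta> x = 0"
proof -
  have "of_bool (E u v \<and> \<not> \<eta> u \<and> \<not> \<eta> v \<and> (u \<in> nbhd V E x \<or> v \<in> nbhd V E x)) = (0 :: real)"
    for u v
    using assms edge_irrefl by (auto simp: nbhd_def dest: edge_sym edge_in_V)
  then show ?thesis unfolding zero_edges_near_def by (intro sum.neutral ballI)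
qed

lemma zero_edges_near_le:
  assumes "x \<in> V"
  shows "zero_edges_near \<eta> x \<le> 2 * real d * (\<Sum>y\<in>nbhd V E x. of_bool (\<not> \<eta> y))"
proof -
  have "zero_edges_near \<eta> x
      \<le> (\<Sum>u\<in>V. \<Sum>v\<in>V. of_bool (E u v \<and> ((u \<in> nbhd V E x \<and> \<not> \<eta> u) \<or> (v \<in> nbhd V E x \<and> \<not> \<eta> v))))"
    unfolding zero_edges_near_def by (intro sum_mono) auto
  also have "\<dots> \<le> 2 * real d * (\<Sum>u\<in>V. of_bool (u \<in> nbhd V E x \<and> \<not> \<eta> u))"
    by (rule sum_edges_touching_le)
  finally show ?thesis unfolding sum_of_bool_nbhd[OF assms] .
qed

lemma ring_mean_potential_diff_isolated_zero:
  assumes "x \<in> V" and "\<not> \<eta> x" and isolated: "\<forall>y\<in>nbhd V E x. y \<noteq> x \<longrightarrow> \<eta> y"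
    and q0: "1 - p \<le> q0_bound d"
  shows "ring_mean x \<eta> (\<lambda>\<eta>'. potential \<eta>' - potential \<eta>) \<le> - drift_gap d"
proof -
  define q where "q = 1 - p"
  define g where "g = real (card {y\<in>V. E x y})"
  have "0 < q" "q \<le> 1" using p_pos p_less_1 by (auto simp: q_def)
  have "g \<le> real d" using degree_le[OF assms(1)] by (simp add: g_def)
  have single_zero: "(\<Sum>y\<in>nbhd V E x. of_bool (\<not> \<eta> y)) = (1 :: real)"
    using sum.remove[OF finite_nbhd self_in_nbhd, of "\<lambda>y. of_bool (\<not> \<eta> y)" x] isolated assms(2)
    by simp
  have mean: "ring_mean x \<eta> (\<lambda>\<eta>'. potential \<eta>' - potential \<eta>) \<le> q * (1 + g) - 1 - edge_weight * (q\<^sup>2 * g)"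
    using ring_mean_potential_diff_le[OF assms(1), of \<eta>]
    unfolding single_zero zero_edges_near_eq_0[OF isolated] q_def g_def by simp
  have "edge_weight * q\<^sup>2 \<le> q"
  proof -
    have "edge_weight \<le> 1" using degree_pos by (simp add: edge_weight_def)
    moreover have "q\<^sup>2 \<le> q" using \<open>0 < q\<close> \<open>q \<le> 1\<close> by (simp add: power2_eq_square)
    ultimately show ?thesis using edge_weight_pos \<open>0 < q\<close> by (simp add: mult_le_one power2_eq_square)
  qed
  then have "g * (q - edge_weight * q\<^sup>2) \<le> real d * (q - edge_weight * q\<^sup>2)"
    using \<open>g \<le> real d\<close> by (intro mult_right_mono) auto
  then have "q * (1 + g) - 1 - edge_weight * (q\<^sup>2 * g) \<le> q - 1 + real d * (q - edge_weight * q\<^sup>2)"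
    by (simp add: algebra_simps)
  also have "\<dots> = q * (real d + 1) - 1 - q\<^sup>2 / 8"
    using edge_weight_mult_degree by (simp add: algebra_simps)
  also have "\<dots> \<le> - drift_gap d"
    using quadratic_drift_le[OF degree_pos \<open>0 < q\<close>] mult_right_mono[OF q0, of "real d + 1"] q0_bound_mult[of d]
    by (simp add: q_def)
  finally show ?thesis using mean by simp
qed

lemma ring_mean_potential_diff_two_zeros:
  assumes "x \<in> V" and "\<not> \<eta> x" and y: "y \<in> nbhd V E x" "y \<noteq> x" "\<not> \<eta> y"
    and q0: "1 - p \<le> q0_bound d"
  shows "ring_mean x \<eta> (\<lambda>\<eta>'. potential \<eta>' - potential \<eta>) \<le> - drift_gap d"
proof -
  define q where "q = 1 - p"
  define g where "g = real (card {y\<in>V. E x y})"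
  define z where "z = (\<Sum>y\<in>nbhd V E x. of_bool (\<not> \<eta> y) :: real)"
  have "0 < q" using p_less_1 by (simp add: q_def)
  have "g \<le> real d" using degree_le[OF assms(1)] by (simp add: g_def)
  have "z \<ge> 2"
  proof -
    have "(\<Sum>u\<in>{x, y}. of_bool (\<not> \<eta> u)) \<le> z"
      unfolding z_def using y self_in_nbhd finite_nbhd by (intro sum_mono2) auto
    then show ?thesis using y assms(2) by simp
  qed
  have "edge_weight * zero_edges_near \<eta> x \<le> edge_weight * (2 * real d * z)"
    using mult_left_mono[OF zero_edges_near_le[OF assms(1)], of edge_weight] edge_weight_pos
    by (simp add: z_def)
  also have "\<dots> = z / 4" using edge_weight_mult_degree by (simp add: algebra_simps)
  finally have "edge_weight * zero_edges_near \<eta> x \<le> z / 4" .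
  moreover have "q * (1 + g) \<le> q * (real d + 1)"
    using \<open>g \<le> real d\<close> \<open>0 < q\<close> by simp
  moreover have "q * (real d + 1) \<le> 1 + drift_gap d"
    using mult_right_mono[OF q0, of "real d + 1"] q0_bound_mult[of d] by (simp add: q_def)
  moreover have "0 \<le> edge_weight * q\<^sup>2 * g"
    using edge_weight_pos by (simp add: g_def)
  moreover have "edge_weight * (q\<^sup>2 * g - zero_edges_near \<eta> x)
      = edge_weight * q\<^sup>2 * g - edge_weight * zero_edges_near \<eta> x"
    by (simp add: algebra_simps)
  ultimately show ?thesis
    using ring_mean_potential_diff_le[OF assms(1), of \<eta>] \<open>z \<ge> 2\<close> drift_gap_le[of d]
    unfolding q_def g_def z_def by linarith
qed

lemma ring_mean_potential_diff_le_neg: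
  assumes "x \<in> V" and "\<not> \<eta> x" and "1 - p \<le> q0_bound d"
  shows "ring_mean x \<eta> (\<lambda>\<eta>'. potential \<eta>' - potential \<eta>) \<le> - drift_gap d"
proof (cases "\<forall>y\<in>nbhd V E x. y \<noteq> x \<longrightarrow> \<eta> y")
  case True
  then show ?thesis using ring_mean_potential_diff_isolated_zero assms by blast
next
  case False
  then show ?thesis using ring_mean_potential_diff_two_zeros assms by blast
qed

definition lyapunov :: "(nat \<Rightarrow> bool) \<Rightarrow> real" where
  "lyapunov \<eta> = exp (lyapunov_rate d * potential \<eta>)"

lemma exp_potential_diff_le:
  assumes "x \<in> V" and "\<eta>' \<in> resamplings (nbhd V E x) \<eta>"
  defines "t \<equiv> lyapunov_rate d * (potential \<eta>' - potential \<eta>)"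
  shows "exp t - 1 \<le> t + lyapunov_rate d * (drift_gap d / 2)"
proof -
  let ?\<theta> = "lyapunov_rate d"
  have bound: "\<bar>t\<bar> \<le> ?\<theta> * (2 * (real d + 1))"
    using potential_resample_diff_abs[OF assms(1,2)] lyapunov_rate_pos[of d]
    by (simp add: t_def abs_mult abs_of_pos mult_left_mono)
  then have "\<bar>t\<bar> \<le> 1" using lyapunov_rate_bounds(1)[of d] by linarith
  moreover have "t\<^sup>2 \<le> (?\<theta> * (2 * (real d + 1)))\<^sup>2"
    using power_mono[OF bound abs_ge_zero, of 2] by simp
  moreover have "(?\<theta> * (2 * (real d + 1)))\<^sup>2 = ?\<theta> * (?\<theta> * (4 * (real d + 1)\<^sup>2))"
    by (simp add: power2_eq_square algebra_simps)
  ultimately show ?thesis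
    using exp_le_1_plus_sq[of t] lyapunov_rate_bounds(2)[of d] by simp
qed

lemma ring_mean_lyapunov_diff_le:
  assumes x: "x \<in> V" "\<not> \<eta> x" and q: "1 - p \<le> q0_bound d"
  shows "ring_mean x \<eta> (\<lambda>\<eta>'. lyapunov \<eta>' - lyapunov \<eta>)
       \<le> - (lyapunov_rate d * drift_gap d / 2) * lyapunov \<eta>"
proof -
  let ?\<theta> = "lyapunov_rate d"
  let ?t = "\<lambda>\<eta>'. ?\<theta> * (potential \<eta>' - potential \<eta>)"
  have factor: "lyapunov \<eta>' - lyapunov \<eta> = lyapunov \<eta> * (exp (?t \<eta>') - 1)" for \<eta>'
    by (simp add: lyapunov_def right_diff_distrib exp_diff field_simps)
  have "ring_mean x \<eta> (\<lambda>\<eta>'. exp (?t \<eta>') - 1)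
      \<le> ring_mean x \<eta> (\<lambda>\<eta>'. ?\<theta> * (potential \<eta>' - potential \<eta>) + ?\<theta> * (drift_gap d / 2))"
    using x(1) by (intro ring_mean_mono exp_potential_diff_le)
  also have "\<dots> = ?\<theta> * ring_mean x \<eta> (\<lambda>\<eta>'. potential \<eta>' - potential \<eta>) + ?\<theta> * (drift_gap d / 2)"
    by (simp only: bernoulli_mean_add bernoulli_mean_cmult ring_mean_const)
  also have "\<dots> \<le> ?\<theta> * (- drift_gap d) + ?\<theta> * (drift_gap d / 2)"
    using ring_mean_potential_diff_le_neg[of x \<eta>, OF x q] lyapunov_rate_pos[of d]
    by (intro add_right_mono mult_left_mono) auto
  finally have "ring_mean x \<eta> (\<lambda>\<eta>'. exp (?t \<eta>') - 1) \<le> - (?\<theta> * drift_gap d / 2)"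
    by (simp add: algebra_simps)
  then have "lyapunov \<eta> * ring_mean x \<eta> (\<lambda>\<eta>'. exp (?t \<eta>') - 1) \<le> lyapunov \<eta> * (- (?\<theta> * drift_gap d / 2))"
    by (intro mult_left_mono) (simp_all add: lyapunov_def)
  then show ?thesis
    unfolding factor bernoulli_mean_cmult by (simp add: mult.commute)
qed

definition all_ones :: "nat \<Rightarrow> bool" where
  "all_ones y \<longleftrightarrow> y \<in> V"

lemma all_ones_in_configs: "all_ones \<in> configs V"
  by (simp add: all_ones_def configs_def)

lemma lyapunov_all_ones: "lyapunov all_ones = 1"
  by (simp add: lyapunov_def potential_def zero_count_def zero_edges_def all_ones_def)

lemma ex_zero_if_ne_all_ones: "\<eta> \<in> configs V \<Longrightarrow> \<eta> \<noteq> all_ones \<Longrightarrow> \<exists>y\<in>V. \<not> \<eta> y"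
  by (auto simp: configs_def all_ones_def fun_eq_iff)

lemma generator_lyapunov_le:
  assumes \<eta>: "\<eta> \<in> configs V" "\<eta> \<noteq> all_ones" and q: "1 - p \<le> q0_bound d"
  shows "(\<Sum>\<eta>'\<in>configs V. bs_rate V E p \<eta> \<eta>' * (lyapunov \<eta>' - lyapunov \<eta>))
       \<le> - (lyapunov_rate d * drift_gap d / 2) * lyapunov \<eta>"
proof -
  let ?c = "- (lyapunov_rate d * drift_gap d / 2) * lyapunov \<eta>"
  obtain y where y: "y \<in> V" "\<not> \<eta> y" using ex_zero_if_ne_all_ones[OF \<eta>] by blast
  have "clock_effective \<eta> x \<longleftrightarrow> \<not> \<eta> x" for x using y by (auto simp: clock_effective_def)
  then have "(\<Sum>\<eta>'\<in>configs V. bs_rate V E p \<eta> \<eta>' * (lyapunov \<eta>' - lyapunov \<eta>))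
      = (\<Sum>x\<in>V. if \<not> \<eta> x then ring_mean x \<eta> (\<lambda>\<eta>'. lyapunov \<eta>' - lyapunov \<eta>) else 0)"
    using generator_eq_sum_ring_mean[OF \<eta>(1)] by simp
  also have "\<dots> \<le> (\<Sum>x\<in>V. ?c * of_bool (\<not> \<eta> x))"
    using ring_mean_lyapunov_diff_le q by (intro sum_mono) auto
  also have "\<dots> = ?c * zero_count \<eta>" by (simp add: zero_count_def sum_distrib_left)
  also have "\<dots> \<le> ?c"
  proof -
    have "0 < card (zeros V \<eta>)" using y finite_V by (auto simp: card_gt_0_iff zeros_def)
    then have "1 \<le> zero_count \<eta>" by (simp add: zero_count_eq_card)
    moreover have "?c \<le> 0" using lyapunov_rate_pos[of d] drift_gap_pos[of d] by (simp add: lyapunov_def)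
    ultimately show ?thesis by (simp add: mult_le_cancel_left1)
  qed
  finally show ?thesis .
qed

lemma bs_rate_to_all_ones_le:
  assumes \<eta>: "\<eta> \<in> configs V" "\<eta> \<noteq> all_ones"
  shows "bs_rate V E p \<eta> all_ones \<le> real d + 1"
proof -
  \<comment> \<open>Only a ring inside the neighbourhood of a zero \<open>y\<close> can remove that zero.\<close>
  obtain y where y: "y \<in> V" "\<not> \<eta> y" using ex_zero_if_ne_all_ones[OF \<eta>] by blast
  have "bs_rate V E p \<eta> all_ones \<le> (\<Sum>x\<in>V. of_bool (x \<in> nbhd V E y))"
    unfolding bs_rate_def
  proof (intro sum_mono)
    fix x assume x: "x \<in> V"
    have "(\<Prod>z\<in>nbhd V E x. if all_ones z then p else 1 - p) \<le> 1"
      using p_pos p_less_1 by (intro prod_le_1) auto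
    moreover have "y \<in> nbhd V E x" if "\<forall>z. z \<notin> nbhd V E x \<longrightarrow> all_ones z = \<eta> z"
      using that y by (auto simp: all_ones_def)
    then have "x \<in> nbhd V E y" if "\<forall>z. z \<notin> nbhd V E x \<longrightarrow> all_ones z = \<eta> z"
      using that nbhd_sym[OF x] by blast
    ultimately show "(if (\<not> \<eta> x \<or> (\<forall>y\<in>V. \<eta> y)) \<and> (\<forall>z. z \<notin> nbhd V E x \<longrightarrow> all_ones z = \<eta> z)
        then \<Prod>z\<in>nbhd V E x. if all_ones z then p else 1 - p else 0) \<le> of_bool (x \<in> nbhd V E y)"
      by auto
  qed
  also have "\<dots> \<le> real d + 1" by (rule sum_of_bool_mem_nbhd_le[OF y(1)])
  finally show ?thesis .
qed

lemma stationary_all_ones_outflow_le: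
  assumes "bs_stationary V E p \<pi>"
  shows "\<pi> all_ones * (\<Sum>\<eta>\<in>configs V - {all_ones}. bs_rate V E p all_ones \<eta>) \<le> real d + 1"
proof -
  let ?C = "configs V" and ?r = "bs_rate V E p"
  have nonneg: "\<And>\<eta>. \<eta> \<in> ?C \<Longrightarrow> 0 \<le> \<pi> \<eta>" and total: "(\<Sum>\<eta>\<in>?C. \<pi> \<eta>) = 1"
    and balance: "(\<Sum>\<eta>\<in>?C. \<pi> \<eta> * ?r \<eta> all_ones) = \<pi> all_ones * (\<Sum>\<eta>\<in>?C. ?r all_ones \<eta>)"
    using assms all_ones_in_configs unfolding bs_stationary_def by auto
  have "(\<Sum>\<eta>\<in>?C. \<pi> \<eta> * ?r \<eta> all_ones)
      = \<pi> all_ones * ?r all_ones all_ones + (\<Sum>\<eta>\<in>?C - {all_ones}. \<pi> \<eta> * ?r \<eta> all_ones)"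
    and "(\<Sum>\<eta>\<in>?C. ?r all_ones \<eta>) = ?r all_ones all_ones + (\<Sum>\<eta>\<in>?C - {all_ones}. ?r all_ones \<eta>)"
    by (rule sum.remove[OF finite_configs all_ones_in_configs])+
  then have "\<pi> all_ones * (\<Sum>\<eta>\<in>?C - {all_ones}. ?r all_ones \<eta>) = (\<Sum>\<eta>\<in>?C - {all_ones}. \<pi> \<eta> * ?r \<eta> all_ones)"
    using balance by (simp add: algebra_simps)
  also have "\<dots> \<le> (\<Sum>\<eta>\<in>?C - {all_ones}. \<pi> \<eta> * (real d + 1))"
    using nonneg bs_rate_to_all_ones_le by (intro sum_mono mult_left_mono) auto
  also have "\<dots> \<le> (\<Sum>\<eta>\<in>?C. \<pi> \<eta>) * (real d + 1)"
    using nonneg finite_configs by (simp add: sum_distrib_right[symmetric]) (intro sum_mono2, auto)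
  finally show ?thesis using total by simp
qed

lemma lyapunov_after_ring_at_all_ones_le:
  assumes "bs_rate V E p all_ones \<eta> \<noteq> 0"
  shows "lyapunov \<eta> \<le> exp (lyapunov_rate d * (real d + 1))"
proof -
  have "\<exists>x\<in>V. \<forall>z. z \<notin> nbhd V E x \<longrightarrow> \<eta> z = all_ones z"
  proof (rule ccontr)
    assume "\<not> ?thesis"
    then have "bs_rate V E p all_ones \<eta> = 0" unfolding bs_rate_def by (intro sum.neutral) auto
    with assms show False by simp
  qed
  then obtain x where x: "x \<in> V" and agree: "\<forall>z. z \<notin> nbhd V E x \<longrightarrow> \<eta> z = all_ones z"
    by blast
  have "zero_count \<eta> \<le> (\<Sum>y\<in>V. of_bool (y \<in> nbhd V E x))"
    unfolding zero_count_def using agree by (intro sum_mono) (auto simp: all_ones_def)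
  also have "\<dots> \<le> real d + 1" by (rule sum_of_bool_mem_nbhd_le[OF x])
  finally have "potential \<eta> \<le> real d + 1" using potential_le order_trans by blast
  then show ?thesis
    unfolding lyapunov_def using lyapunov_rate_pos by simp
qed

lemma generator_lyapunov_all_ones_le:
  "(\<Sum>\<eta>\<in>configs V. bs_rate V E p all_ones \<eta> * (lyapunov \<eta> - lyapunov all_ones))
     \<le> (exp (lyapunov_rate d * (real d + 1)) - 1) * (\<Sum>\<eta>\<in>configs V - {all_ones}. bs_rate V E p all_ones \<eta>)"
proof -
  let ?K = "exp (lyapunov_rate d * (real d + 1)) - 1"
  have "(\<Sum>\<eta>\<in>configs V. bs_rate V E p all_ones \<eta> * (lyapunov \<eta> - lyapunov all_ones))
      = (\<Sum>\<eta>\<in>configs V - {all_ones}. bs_rate V E p all_ones \<eta> * (lyapunov \<eta> - 1))"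
    using sum.remove[OF finite_configs all_ones_in_configs,
        of "\<lambda>\<eta>. bs_rate V E p all_ones \<eta> * (lyapunov \<eta> - lyapunov all_ones)"]
    by (simp add: lyapunov_all_ones)
  also have "\<dots> \<le> (\<Sum>\<eta>\<in>configs V - {all_ones}. bs_rate V E p all_ones \<eta> * ?K)"
  proof (intro sum_mono)
    fix \<eta>
    have "lyapunov \<eta> - 1 \<le> ?K" if "bs_rate V E p all_ones \<eta> \<noteq> 0"
      using lyapunov_after_ring_at_all_ones_le[OF that] by simp
    then show "bs_rate V E p all_ones \<eta> * (lyapunov \<eta> - 1) \<le> bs_rate V E p all_ones \<eta> * ?K"
      using bs_rate_nonneg[of all_ones \<eta>]
      by (cases "bs_rate V E p all_ones \<eta> = 0") (simp_all add: mult_left_mono)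
  qed
  also have "\<dots> = ?K * (\<Sum>\<eta>\<in>configs V - {all_ones}. bs_rate V E p all_ones \<eta>)"
    by (subst sum_distrib_right[symmetric]) (rule mult.commute)
  finally show ?thesis .
qed


lemma stationary_lyapunov_mean_le:
  assumes "bs_stationary V E p \<pi>" and "1 - p \<le> q0_bound d"
  shows "(\<Sum>\<eta>\<in>configs V - {all_ones}. \<pi> \<eta> * lyapunov \<eta>) \<le> tail_const d"
proof -
  let ?K = "exp (lyapunov_rate d * (real d + 1)) - 1"
  let ?c = "lyapunov_rate d * drift_gap d / 2"
  have "0 \<le> \<pi> all_ones" and "0 < ?K"
    using assms(1) all_ones_in_configs lyapunov_rate_pos unfolding bs_stationary_def by auto
  then have "\<pi> all_ones * (\<Sum>\<eta>\<in>configs V. bs_rate V E p all_ones \<eta> * (lyapunov \<eta> - lyapunov all_ones))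
      \<le> \<pi> all_ones * (?K * (\<Sum>\<eta>\<in>configs V - {all_ones}. bs_rate V E p all_ones \<eta>))"
    using generator_lyapunov_all_ones_le by (intro mult_left_mono)
  also have "\<dots> \<le> ?K * (real d + 1)"
    using stationary_all_ones_outflow_le[OF assms(1)] \<open>0 < ?K\<close>
    by (simp add: mult.left_commute mult_left_mono)
  finally have exit: "\<pi> all_ones * (\<Sum>\<eta>\<in>configs V. bs_rate V E p all_ones \<eta> * (lyapunov \<eta> - lyapunov all_ones))
      \<le> ?K * (real d + 1)" .
  have "(\<Sum>\<eta>\<in>configs V - {all_ones}. \<pi> \<eta> * lyapunov \<eta>) \<le> ?K * (real d + 1) / ?c"
    using finite_configs all_ones_in_configs
  proof (rule foster_lyapunov_bound[where r = "bs_rate V E p"])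
    show "0 < ?c" using lyapunov_rate_pos drift_gap_pos by simp
    show "\<forall>\<eta>'\<in>configs V. (\<Sum>\<eta>\<in>configs V. \<pi> \<eta> * bs_rate V E p \<eta> \<eta>') = \<pi> \<eta>' * (\<Sum>\<eta>\<in>configs V. bs_rate V E p \<eta>' \<eta>)"
      and "\<And>\<eta>. \<eta> \<in> configs V \<Longrightarrow> 0 \<le> \<pi> \<eta>"
      using assms(1) unfolding bs_stationary_def by auto
    show "\<And>\<eta>. \<eta> \<in> configs V - {all_ones} \<Longrightarrow>
        (\<Sum>\<eta>'\<in>configs V. bs_rate V E p \<eta> \<eta>' * (lyapunov \<eta>' - lyapunov \<eta>)) \<le> - ?c * lyapunov \<eta>"
      using generator_lyapunov_le assms(2) by auto
  qed (rule exit)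
  also have "\<dots> = tail_const d" by (simp add: tail_const_def field_simps)
  finally show ?thesis .
qed

lemma stationary_tail_le:
  assumes "bs_stationary V E p \<pi>" and "1 - p \<le> q0_bound d"
  shows "(\<Sum>\<eta>\<in>{\<eta> \<in> configs V. card (zeros V \<eta>) > k}. \<pi> \<eta>) \<le> tail_const d * exp (- tail_rate d * real k)"
proof -
  let ?A = "{\<eta> \<in> configs V. card (zeros V \<eta>) > k}"
  let ?s = "exp (- tail_rate d * real k)"
  have nonneg: "\<And>\<eta>. \<eta> \<in> configs V \<Longrightarrow> 0 \<le> \<pi> \<eta>" using assms(1) by (simp add: bs_stationary_def)
  \<comment> \<open>Markov's inequality: on ?A the potential exceeds \<open>7/8 k\<close>.\<close>
  have "\<pi> \<eta> \<le> \<pi> \<eta> * lyapunov \<eta> * ?s" if "\<eta> \<in> ?A" for \<eta>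
  proof -
    have "tail_rate d * real k \<le> lyapunov_rate d * (7/8 * zero_count \<eta>)"
      using that lyapunov_rate_pos by (simp add: tail_rate_def zero_count_eq_card)
    also have "\<dots> \<le> lyapunov_rate d * potential \<eta>"
      using potential_ge lyapunov_rate_pos[of d] by (intro mult_left_mono) auto
    finally have "1 \<le> lyapunov \<eta> * ?s" by (simp add: lyapunov_def exp_minus field_simps)
    then show ?thesis using nonneg[of \<eta>] that mult_left_mono by fastforce
  qed
  then have "(\<Sum>\<eta>\<in>?A. \<pi> \<eta>) \<le> (\<Sum>\<eta>\<in>?A. \<pi> \<eta> * lyapunov \<eta> * ?s)" by (rule sum_mono)
  also have "\<dots> \<le> (\<Sum>\<eta>\<in>configs V - {all_ones}. \<pi> \<eta> * lyapunov \<eta> * ?s)"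
  proof (rule sum_mono2)
    have "card (zeros V all_ones) = 0" by (simp add: zeros_def all_ones_def)
    then show "?A \<subseteq> configs V - {all_ones}" by auto
  qed (use finite_configs nonneg in \<open>auto simp: lyapunov_def\<close>)
  also have "\<dots> \<le> tail_const d * ?s"
    using stationary_lyapunov_mean_le[OF assms] by (simp add: sum_distrib_right[symmetric])
  finally show ?thesis .
qed

end

lemma bak_sneppen_zero_count_tail:
  assumes "conn_simple_graph V E" and "max_degree V E = d" and "d \<ge> 1" and "0 < p" and "p < 1"
    and "1 - p \<le> q0_bound d" and "bs_stationary V E p \<pi>"
  shows "(\<Sum>\<eta>\<in>{\<eta> \<in> configs V. card (zeros V \<eta>) > k}. \<pi> \<eta>) \<le> tail_const d * exp (- tail_rate d * real k)"
proof -
  interpret bak_sneppen V E d p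
    using assms(1-5) by unfold_locales
  show ?thesis using assms(7,6) by (rule stationary_tail_le)
qed

theorem theorem3:
  "\<forall>d::nat. d \<ge> 1 \<longrightarrow>
     (\<exists>q0::real. q0 > 1 / (real d + 1) \<and>
       (\<exists>c1 c2::real. c1 > 0 \<and> c2 > 0 \<and>
         (\<forall>V E p \<pi>. conn_simple_graph V E \<longrightarrow> max_degree V E = d \<longrightarrow>
            0 < p \<longrightarrow> p < 1 \<longrightarrow> 1 - p \<le> q0 \<longrightarrow>
            bs_stationary V E p \<pi> \<longrightarrow>
            (\<forall>k::nat. (\<Sum>\<eta>\<in>{\<eta> \<in> configs V. card (zeros V \<eta>) > k}. \<pi> \<eta>)
                        \<le> c1 * exp (- c2 * real k)))))"
  using q0_bound_gt tail_const_pos tail_rate_pos bak_sneppen_zero_count_tail by blast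

end
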